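(* Let $n\ge2$ and let $\Sigma=\mathbb{R}^n\subset\mathbb{R}^{n+1}$ be a hyperplane through the origin. Then the region $$\Big\{\vec x\in\Sigma:\ |\vec x|>2\sqrt{(n+2)\Big(\sqrt{\tfrac{3n+2}{n+2}}-1\Big)}\Big\}$$ is stable.
   Context: Stability operator on a self-shrinker: $Lf=\Delta f-\tfrac12\langle\vec x,\nabla f\rangle+(|A|^2+\tfrac12)f$. A region $\Omega$ is stable if there exists a function $u$ with $Lu=0$ and $u>0$ on $\Omega$. *)

theory Defs
  imports "HOL-Analysis.Analysis"
begin

definition pdiff :: "('a::euclidean_space \<Rightarrow> real) \<Rightarrow> 'a \<Rightarrow> 'a \<Rightarrow> real" where
  "pdiff u i x = frechet_derivative u (at x) i"

definition grad :: "('a::euclidean_space \<Rightarrow> real) \<Rightarrow> 'a \<Rightarrow> 'a" where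
  "grad u x = (\<Sum>i\<in>Basis. pdiff u i x *\<^sub>R i)"

definition laplacian :: "('a::euclidean_space \<Rightarrow> real) \<Rightarrow> 'a \<Rightarrow> real" where
  "laplacian u x = (\<Sum>i\<in>Basis. pdiff (pdiff u i) i x)"

definition C2_on :: "'a::euclidean_space set \<Rightarrow> ('a \<Rightarrow> real) \<Rightarrow> bool" where
  "C2_on \<Omega> u \<longleftrightarrow>
     (\<forall>x\<in>\<Omega>. u differentiable at x) \<and>
     (\<forall>i\<in>Basis. \<forall>x\<in>\<Omega>. pdiff u i differentiable at x) \<and>
     (\<forall>i\<in>Basis. \<forall>j\<in>Basis. continuous_on \<Omega> (pdiff (pdiff u i) j))"

text \<open>Stability operator of a self-shrinker with squared second fundamental form Asq:
  L f = \<Delta>f - 1/2 <x, \<nabla>f> + (|A|^2 + 1/2) f.\<close>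
definition stab_op :: "('a::euclidean_space \<Rightarrow> real) \<Rightarrow> ('a \<Rightarrow> real) \<Rightarrow> 'a \<Rightarrow> real" where
  "stab_op Asq f x = laplacian f x - (1/2) * (x \<bullet> grad f x) + (Asq x + 1/2) * f x"

text \<open>A region \<Omega> of the shrinker (parametrized by the Euclidean space 'a) is stable
  if there is a (C^2) u with L u = 0 and u > 0 on \<Omega>.\<close>
definition stable_region :: "('a::euclidean_space \<Rightarrow> real) \<Rightarrow> 'a set \<Rightarrow> bool" where
  "stable_region Asq \<Omega> \<longleftrightarrow>
     (\<exists>u. C2_on \<Omega> u \<and> (\<forall>x\<in>\<Omega>. stab_op Asq u x = 0 \<and> u x > 0))"

end

theory Submission
  imports Defs
begin

text \<open>
  We find a radial solution \<open>u x = G (|x|\<^sup>2)\<close> of \<open>L u = 0\<close> on the flat shrinker \<open>\<real>\<^sup>n\<close>, where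
  \<open>|A|\<^sup>2 = 0\<close>. With \<open>s = |x|\<^sup>2\<close> the equation becomes the Kummer-type ODE
  \<open>4 s G'' + (2n - s) G' + G/2 = 0\<close>, whose entire solution with \<open>G 0 = -1\<close> has Taylor
  coefficients \<open>a\<^sub>0 = -1\<close>, \<open>a\<^sub>1 = 1/(4n)\<close>, \<open>a\<^sub>2 = 1/(32n(n+2))\<close> and all further
  coefficients nonnegative. Hence \<open>G s \<ge> -1 + s/(4n) + s\<^sup>2/(32n(n+2))\<close> for \<open>s \<ge> 0\<close>, and the
  positive root of this quadratic is \<open>4(n+2)(\<surd>((3n+2)/(n+2)) - 1)\<close>, so \<open>u > 0\<close> beyond the
  stated radius.
\<close>

definition power_series :: "(nat \<Rightarrow> real) \<Rightarrow> real \<Rightarrow> real" where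
  "power_series c s = (\<Sum>k. c k * s ^ k)"

lemma power_series_has_real_derivative:
  assumes "\<And>y. summable (\<lambda>k. c k * y ^ k)"
  shows "(power_series c has_real_derivative power_series (diffs c) s) (at s)"
  unfolding power_series_def[abs_def]
  by (rule termdiffs_strong_converges_everywhere[OF assms])

lemma sums_of_nat_times_power_series:
  assumes "summable (\<lambda>k. diffs c k * s ^ k)"
  shows "(\<lambda>k. of_nat k * c k * s ^ k) sums (s * power_series (diffs c) s)"
proof -
  have "(\<lambda>k. s * (diffs c k * s ^ k)) sums (s * power_series (diffs c) s)"
    unfolding power_series_def using assms by (intro sums_mult summable_sums)
  then have "(\<lambda>k. (\<lambda>k. of_nat k * c k * s ^ k) (Suc k)) sums (s * power_series (diffs c) s)"
    by (simp add: diffs_def algebra_simps)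
  then show ?thesis
    using sums_Suc_iff[of "\<lambda>k. of_nat k * c k * s ^ k"] by simp
qed

fun shrinker_coeff :: "real \<Rightarrow> nat \<Rightarrow> real" where
  "shrinker_coeff n 0 = -1"
| "shrinker_coeff n (Suc k) =
     (real k - 1/2) * shrinker_coeff n k / ((real k + 1) * (4 * real k + 2 * n))"

definition shrinker_profile :: "real \<Rightarrow> real \<Rightarrow> real" where
  "shrinker_profile n = power_series (shrinker_coeff n)"

lemma abs_shrinker_coeff_le:
  assumes "n \<ge> 1"
  shows "\<bar>shrinker_coeff n k\<bar> \<le> 1 / fact k"
proof (induction k)
  case 0
  then show ?case by simp
next
  case (Suc k)
  have pos: "(real k + 1) * (4 * real k + 2 * n) > 0"
    using assms by simp
  have "\<bar>shrinker_coeff n (Suc k)\<bar>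
      = \<bar>real k - 1/2\<bar> * \<bar>shrinker_coeff n k\<bar> / ((real k + 1) * (4 * real k + 2 * n))"
    using pos assms by (simp add: abs_mult abs_divide)
  also have "\<dots> \<le> (4 * real k + 2 * n) * (1 / fact k) / ((real k + 1) * (4 * real k + 2 * n))"
    using assms Suc pos by (intro divide_right_mono mult_mono) auto
  also have "\<dots> = 1 / fact (Suc k)"
    using assms by (simp add: fact_Suc divide_simps)
  finally show ?case .
qed

lemma summable_shrinker_coeff:
  assumes "n \<ge> 1"
  shows "summable (\<lambda>k. shrinker_coeff n k * y ^ k)"
proof (rule summable_comparison_test[OF _ summable_exp[of "\<bar>y\<bar>"]])
  show "\<exists>N. \<forall>k\<ge>N. norm (shrinker_coeff n k * y ^ k) \<le> inverse (fact k) * \<bar>y\<bar> ^ k"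
    using abs_shrinker_coeff_le[OF assms]
    by (auto simp: abs_mult power_abs divide_inverse intro!: mult_right_mono)
qed

lemma summable_diffs_shrinker_coeff:
  assumes "n \<ge> 1"
  shows "summable (\<lambda>k. diffs (shrinker_coeff n) k * y ^ k)"
    and "summable (\<lambda>k. diffs (diffs (shrinker_coeff n)) k * y ^ k)"
  by (intro termdiff_converges_all summable_shrinker_coeff[OF assms])+

lemma shrinker_coeff_nonneg:
  assumes "n > 0" "k \<ge> 1"
  shows "shrinker_coeff n k \<ge> 0"
  using assms(2)
proof (induction k)
  case 0
  then show ?case by simp
next
  case (Suc k)
  show ?case
  proof (cases "k = 0")
    case True
    then show ?thesis using assms by simp
  next
    case False
    then have "shrinker_coeff n k \<ge> 0" "real k \<ge> 1"
      using Suc by auto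
    then show ?thesis
      using assms by (auto intro!: divide_nonneg_pos mult_nonneg_nonneg)
  qed
qed

lemma shrinker_profile_ode:
  assumes "n \<ge> 1"
  defines "a \<equiv> shrinker_coeff n"
  shows "4 * s * power_series (diffs (diffs a)) s + (2 * n - s) * power_series (diffs a) s
           + power_series a s / 2 = 0"
proof -
  note sum0 = summable_shrinker_coeff[OF assms(1), folded a_def]
  note sum1 = summable_diffs_shrinker_coeff(1)[OF assms(1), folded a_def]
  note sum2 = summable_diffs_shrinker_coeff(2)[OF assms(1), folded a_def]
  have "(\<lambda>k. 4 * (of_nat k * diffs a k * s ^ k) + 2 * n * (diffs a k * s ^ k)
              - of_nat k * a k * s ^ k + a k * s ^ k / 2)
        sums (4 * (s * power_series (diffs (diffs a)) s) + 2 * n * power_series (diffs a) s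
              - s * power_series (diffs a) s + power_series a s / 2)"
    unfolding power_series_def
    by (intro sums_add sums_diff sums_mult sums_divide summable_sums sum0 sum1
        sums_of_nat_times_power_series[OF sum2, unfolded power_series_def]
        sums_of_nat_times_power_series[OF sum1, unfolded power_series_def])
  moreover have "4 * (of_nat k * diffs a k * s ^ k) + 2 * n * (diffs a k * s ^ k)
              - of_nat k * a k * s ^ k + a k * s ^ k / 2 = 0" for k
  proof -
    \<comment> \<open>the coefficient of \<open>s\<^sup>k\<close> is \<open>(k+1)(4k+2n) a\<^sub>k\<^sub>+\<^sub>1 - (k - 1/2) a\<^sub>k\<close>\<close>
    have "a (Suc k) * ((real k + 1) * (4 * real k + 2 * n)) = (real k - 1/2) * a k"
      using assms by (simp add: a_def)
    then have "4 * (of_nat k * diffs a k) + 2 * n * diffs a k - of_nat k * a k + a k / 2 = 0"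
      by (simp add: diffs_def algebra_simps)
    moreover have "4 * (of_nat k * diffs a k * s ^ k) + 2 * n * (diffs a k * s ^ k)
        - of_nat k * a k * s ^ k + a k * s ^ k / 2
        = s ^ k * (4 * (of_nat k * diffs a k) + 2 * n * diffs a k - of_nat k * a k + a k / 2)"
      by (simp add: algebra_simps)
    ultimately show ?thesis
      by simp
  qed
  ultimately have "(\<lambda>k. 0) sums (4 * (s * power_series (diffs (diffs a)) s)
      + 2 * n * power_series (diffs a) s - s * power_series (diffs a) s + power_series a s / 2)"
    by simp
  from sums_unique2[OF this sums_zero] show ?thesis
    by (simp add: algebra_simps)
qed

lemma shrinker_profile_derivatives:
  assumes "n \<ge> 1"
  defines "a \<equiv> shrinker_coeff n"
  shows "(shrinker_profile n has_real_derivative power_series (diffs a) s) (at s)"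
    and "(power_series (diffs a) has_real_derivative power_series (diffs (diffs a)) s) (at s)"
    and "continuous_on UNIV (power_series (diffs (diffs a)))"
proof -
  show "(shrinker_profile n has_real_derivative power_series (diffs a) s) (at s)"
    unfolding shrinker_profile_def a_def
    by (rule power_series_has_real_derivative[OF summable_shrinker_coeff[OF assms(1)]])
  show "(power_series (diffs a) has_real_derivative power_series (diffs (diffs a)) s) (at s)"
    unfolding a_def
    by (rule power_series_has_real_derivative[OF summable_diffs_shrinker_coeff(1)[OF assms(1)]])
  show "continuous_on UNIV (power_series (diffs (diffs a)))"
    unfolding a_def
    using power_series_has_real_derivative[OF summable_diffs_shrinker_coeff(2)[OF assms(1)]]
    by (metis continuous_at_imp_continuous_on DERIV_isCont)
qed

lemma shrinker_profile_ge_quadratic: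
  assumes "n \<ge> 1" "s \<ge> 0"
  shows "shrinker_profile n s \<ge> -1 + s / (4 * n) + s\<^sup>2 / (32 * n * (n + 2))"
proof -
  have "(\<Sum>k<3. shrinker_coeff n k * s ^ k) \<le> shrinker_profile n s"
    unfolding shrinker_profile_def power_series_def
    by (rule sum_le_suminf[OF summable_shrinker_coeff[OF assms(1)]])
      (use assms shrinker_coeff_nonneg in auto)
  moreover have "(\<Sum>k<3. shrinker_coeff n k * s ^ k) = -1 + s / (4 * n) + s\<^sup>2 / (32 * n * (n + 2))"
    using assms by (simp add: numeral_3_eq_3 field_simps power2_eq_square)
  ultimately show ?thesis
    by simp
qed

lemma quadratic_lower_bound_pos:
  assumes "n > 0" "s > 4 * ((n + 2) * (sqrt ((3 * n + 2) / (n + 2)) - 1))"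
  shows "-1 + s / (4 * n) + s\<^sup>2 / (32 * n * (n + 2)) > 0"
proof -
  define q where "q = sqrt ((3 * n + 2) / (n + 2))"
  have q1: "q \<ge> 1"
    unfolding q_def using assms(1) by (simp add: le_divide_eq)
  have q_sq: "q\<^sup>2 = (3 * n + 2) / (n + 2)"
    unfolding q_def using assms(1) by simp
  \<comment> \<open>\<open>s\<^sub>0 = 4(n+2)(q-1)\<close> is the positive root of \<open>s\<^sup>2 + 8(n+2)s - 32n(n+2)\<close>\<close>
  define s\<^sub>0 where "s\<^sub>0 = 4 * ((n + 2) * (q - 1))"
  have root: "s\<^sub>0\<^sup>2 + 8 * (n + 2) * s\<^sub>0 - 32 * n * (n + 2) = 0"
  proof -
    have "s\<^sub>0\<^sup>2 + 8 * (n + 2) * s\<^sub>0 - 32 * n * (n + 2) = 16 * (n + 2)\<^sup>2 * (q\<^sup>2 - 1) - 32 * n * (n + 2)"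
      unfolding s\<^sub>0_def by (simp add: algebra_simps power2_eq_square)
    also have "\<dots> = 0"
      unfolding q_sq using assms(1) by (simp add: field_simps power2_eq_square)
    finally show ?thesis .
  qed
  have s: "s > s\<^sub>0" "s\<^sub>0 \<ge> 0"
    using assms q1 unfolding s\<^sub>0_def q_def by auto
  then have "s\<^sup>2 > s\<^sub>0\<^sup>2" "8 * (n + 2) * s > 8 * (n + 2) * s\<^sub>0"
    using assms(1) by (auto intro: power_strict_mono)
  then have "s\<^sup>2 + 8 * (n + 2) * s - 32 * n * (n + 2) > 0"
    using root by linarith
  moreover have "-1 + s / (4 * n) + s\<^sup>2 / (32 * n * (n + 2))
      = (s\<^sup>2 + 8 * (n + 2) * s - 32 * n * (n + 2)) / (32 * n * (n + 2))"
    using assms(1) by (simp add: divide_simps) (simp add: algebra_simps power2_eq_square)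
  ultimately show ?thesis
    using assms(1) by simp
qed

lemma has_derivative_radial:
  assumes "\<And>s. (F has_real_derivative F' s) (at s)"
  shows "((\<lambda>x::'a::euclidean_space. F (x \<bullet> x)) has_derivative (\<lambda>h. 2 * F' (x \<bullet> x) * (x \<bullet> h))) (at x)"
proof -
  have "((\<lambda>x::'a. x \<bullet> x) has_derivative (\<lambda>h. x \<bullet> h + h \<bullet> x)) (at x)"
    by (intro derivative_eq_intros) auto
  from diff_chain_at[OF this assms[of "x \<bullet> x", unfolded has_field_derivative_def]]
  show ?thesis
    by (simp add: o_def inner_commute algebra_simps)
qed

lemma pdiff_radial:
  assumes "\<And>s. (F has_real_derivative F' s) (at s)"
  shows "pdiff (\<lambda>x::'a::euclidean_space. F (x \<bullet> x)) i = (\<lambda>x. 2 * F' (x \<bullet> x) * (x \<bullet> i))"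
  unfolding pdiff_def by (simp add: frechet_derivative_at[OF has_derivative_radial[OF assms], symmetric])

lemma has_derivative_pdiff_radial:
  assumes "\<And>s. (F has_real_derivative F' s) (at s)"
  shows "((\<lambda>x::'a::euclidean_space. 2 * F (x \<bullet> x) * (x \<bullet> i)) has_derivative
          (\<lambda>h. 2 * F (x \<bullet> x) * (h \<bullet> i) + 4 * F' (x \<bullet> x) * (x \<bullet> h) * (x \<bullet> i))) (at x)"
proof -
  have "((\<lambda>x::'a. 2 * F (x \<bullet> x)) has_derivative (\<lambda>h. 2 * (2 * F' (x \<bullet> x) * (x \<bullet> h)))) (at x)"
    using has_derivative_scaleR_right[OF has_derivative_radial[OF assms], of 2] by simp
  moreover have "((\<lambda>x::'a. x \<bullet> i) has_derivative (\<lambda>h. h \<bullet> i)) (at x)"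
    by (intro derivative_eq_intros) auto
  ultimately show ?thesis
    using has_derivative_mult by (fastforce simp: algebra_simps)
qed

lemma pdiff_pdiff_radial:
  assumes "\<And>s. (F has_real_derivative F' s) (at s)"
    and "\<And>s. (F' has_real_derivative F'' s) (at s)"
  shows "pdiff (pdiff (\<lambda>x::'a::euclidean_space. F (x \<bullet> x)) i) j =
         (\<lambda>x. 2 * F' (x \<bullet> x) * (j \<bullet> i) + 4 * F'' (x \<bullet> x) * (x \<bullet> j) * (x \<bullet> i))"
  unfolding pdiff_radial[OF assms(1)] pdiff_def
  by (simp add: frechet_derivative_at[OF has_derivative_pdiff_radial[OF assms(2)], symmetric])

lemma C2_on_radial:
  assumes "\<And>s. (F has_real_derivative F' s) (at s)"
    and "\<And>s. (F' has_real_derivative F'' s) (at s)"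
    and "continuous_on UNIV F''"
  shows "C2_on \<Omega> (\<lambda>x::'a::euclidean_space. F (x \<bullet> x))"
  unfolding C2_on_def
proof (intro conjI ballI)
  fix x :: 'a and i :: 'a
  show "(\<lambda>x. F (x \<bullet> x)) differentiable at x"
    using has_derivative_radial[OF assms(1)] by (rule differentiableI)
  show "pdiff (\<lambda>x. F (x \<bullet> x)) i differentiable at x"
    unfolding pdiff_radial[OF assms(1)]
    using has_derivative_pdiff_radial[OF assms(2)] by (rule differentiableI)
next
  fix i j :: 'a
  have "continuous_on UNIV F'"
    using assms(2) by (metis continuous_at_imp_continuous_on DERIV_isCont)
  have "continuous_on \<Omega> (\<lambda>x::'a. F' (x \<bullet> x))"
    by (rule continuous_on_compose2[OF \<open>continuous_on UNIV F'\<close>]) (auto intro!: continuous_intros)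
  moreover have "continuous_on \<Omega> (\<lambda>x::'a. F'' (x \<bullet> x))"
    by (rule continuous_on_compose2[OF assms(3)]) (auto intro!: continuous_intros)
  ultimately show "continuous_on \<Omega> (pdiff (pdiff (\<lambda>x. F (x \<bullet> x)) i) j)"
    unfolding pdiff_pdiff_radial[OF assms(1,2)] by (intro continuous_intros)
qed

lemma stab_op_radial:
  assumes "\<And>s. (F has_real_derivative F' s) (at s)"
    and "\<And>s. (F' has_real_derivative F'' s) (at s)"
  shows "stab_op Asq (\<lambda>x::'a::euclidean_space. F (x \<bullet> x)) x =
           4 * (x \<bullet> x) * F'' (x \<bullet> x) + (2 * real DIM('a) - x \<bullet> x) * F' (x \<bullet> x)
           + (Asq x + 1/2) * F (x \<bullet> x)"
proof -
  have "laplacian (\<lambda>x. F (x \<bullet> x)) x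
      = (\<Sum>i\<in>Basis. 2 * F' (x \<bullet> x) + 4 * F'' (x \<bullet> x) * ((x \<bullet> i) * (x \<bullet> i)))"
    unfolding laplacian_def pdiff_pdiff_radial[OF assms] by (intro sum.cong) (auto simp: algebra_simps)
  also have "\<dots> = 2 * real DIM('a) * F' (x \<bullet> x) + 4 * F'' (x \<bullet> x) * (\<Sum>i\<in>Basis. (x \<bullet> i) * (x \<bullet> i))"
    by (simp add: sum.distrib sum_distrib_left)
  also have "(\<Sum>i\<in>Basis. (x \<bullet> i) * (x \<bullet> i)) = x \<bullet> x"
    by (rule euclidean_inner[symmetric])
  finally have "laplacian (\<lambda>x. F (x \<bullet> x)) x
      = 2 * real DIM('a) * F' (x \<bullet> x) + 4 * F'' (x \<bullet> x) * (x \<bullet> x)" .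
  moreover have "grad (\<lambda>x. F (x \<bullet> x)) x = (2 * F' (x \<bullet> x)) *\<^sub>R x"
    unfolding grad_def pdiff_radial[OF assms(1)]
    by (simp add: scaleR_sum_right[symmetric] euclidean_representation flip: scaleR_scaleR)
  ultimately show ?thesis
    unfolding stab_op_def by (simp add: algebra_simps)
qed

lemma inner_gt_of_norm_gt_two_sqrt:
  assumes "norm x > 2 * sqrt t"
  shows "x \<bullet> x > 4 * t"
proof (cases "t \<ge> 0")
  case True
  have "(2 * sqrt t)\<^sup>2 < (norm x)\<^sup>2"
    using assms True by (intro power_strict_mono) auto
  then show ?thesis
    using True by (simp add: power_mult_distrib dot_square_norm)
next
  case False
  then show ?thesis
    by (smt (verit) inner_ge_zero)
qed

theorem proposition4p16:
  fixes n :: real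
  assumes "DIM('a::euclidean_space) \<ge> 2"
    and "n = real DIM('a)"
  shows "stable_region (\<lambda>_::'a. 0)
           {x::'a. norm x > 2 * sqrt ((n + 2) * (sqrt ((3*n + 2) / (n + 2)) - 1))}"
proof -
  have n: "n \<ge> 1"
    using assms by simp
  define a where "a = shrinker_coeff n"
  define u where "u = (\<lambda>x::'a. shrinker_profile n (x \<bullet> x))"
  note derivs = shrinker_profile_derivatives[OF n, folded a_def]
  have "C2_on \<Omega> u" for \<Omega>
    unfolding u_def by (rule C2_on_radial[OF derivs])
  moreover have "stab_op (\<lambda>_. 0) u x = 0" for x
    unfolding u_def stab_op_radial[OF derivs(1,2)]
    using shrinker_profile_ode[OF n, of "x \<bullet> x"]
    by (simp add: assms(2) a_def shrinker_profile_def algebra_simps)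
  moreover have "u x > 0"
    if "norm x > 2 * sqrt ((n + 2) * (sqrt ((3*n + 2) / (n + 2)) - 1))" for x
  proof -
    have "x \<bullet> x > 4 * ((n + 2) * (sqrt ((3 * n + 2) / (n + 2)) - 1))"
      using that by (rule inner_gt_of_norm_gt_two_sqrt)
    then show ?thesis
      using shrinker_profile_ge_quadratic[OF n, of "x \<bullet> x"] quadratic_lower_bound_pos[of n "x \<bullet> x"] n
      unfolding u_def by simp
  qed
  ultimately show ?thesis
    unfolding stable_region_def by blast
qed

end
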